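(* Let $\sigma=\langle\mathcal V,\mathcal C,S,B\rangle$ be an approval-based multi-winner election, let $\mathcal A\subseteq\mathcal C$ be non-empty, and let $F\in\mathfrak F^{\mathrm{opt}}_{\sigma,\mathcal A}$. If $c^*\in\mathcal A$ satisfies $\mathrm{Supp}_F(c^* )>\mathrm{maxMin}(\sigma,\mathcal A)$, then $$\mathrm{maxMin}(\sigma,\mathcal A)=\mathrm{maxMin}(\sigma,\mathcal A\setminus\{c^*\}).$$
   Context: An approval-based multi-winner election is a tuple $\sigma=\langle \mathcal V,\mathcal C,S,B\rangle$, where $\mathcal V$ is a finite set of agents, $\mathcal C$ is a finite set of candidates, $1\le S\le|\mathcal C|$ is an integer, and $B:2^{\mathcal C}\to\mathbb N$ gives, for each $\mathcal A\subseteq\mathcal C$, the number $B(\mathcal A)$ of agents whose ballot is exactly $\mathcal A$ (with $\sum_{\mathcal A}B(\mathcal A)\le|\mathcal V|$). For a non-empty $\mathcal A\subseteq\mathcal C$, the family $\mathfrak F_{\sigma,\mathcal A}$ is the set of all $F:2^{\mathcal C}\times\mathcal A\to\mathbb R$ such that: - $F(y,c)\ge0$ for all $y$ and $c$; - $F(y,c)=0$ if $c\notin y$; - $\sum_{c\in\mathcal A\cap y}F(y,c)=B(y)$ whenever $y\cap\mathcal A\neq\emptyset$. We write $\mathrm{Supp}_F(c)=\sum_yF(y,c)$ and $\mathrm{maxMin}(\sigma,\mathcal A)=\sup_{F\in\mathfrak F_{\sigma,\mathcal A}}\min_{c\in\mathcal A}\mathrm{Supp}_F(c)$. We also write $\mathfrak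 F^{\mathrm{opt}}_{\sigma,\mathcal A}=\{F\in\mathfrak F_{\sigma,\mathcal A}:\mathrm{Supp}_F(c)\ge\mathrm{maxMin}(\sigma,\mathcal A)\ \forall c\in\mathcal A\}$. *)

theory Defs
  imports Complex_Main
begin

text \<open>An approval-based multi-winner election: agents V, candidates C, committee size S,
  ballot counts B (B y = number of agents whose ballot is exactly y, for y a subset of C).\<close>
definition election :: "'v set \<Rightarrow> 'c set \<Rightarrow> nat \<Rightarrow> ('c set \<Rightarrow> nat) \<Rightarrow> bool" where
  "election V C S B \<longleftrightarrow> finite V \<and> finite C \<and> 1 \<le> S \<and> S \<le> card C
     \<and> (\<forall>y. \<not> y \<subseteq> C \<longrightarrow> B y = 0)
     \<and> (\<Sum>y\<in>Pow C. B y) \<le> card V"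

text \<open>The family of support distributions F : 2^C x A -> R (values outside that domain irrelevant).\<close>
definition supp_family :: "'c set \<Rightarrow> ('c set \<Rightarrow> nat) \<Rightarrow> 'c set \<Rightarrow> ('c set \<Rightarrow> 'c \<Rightarrow> real) set" where
  "supp_family C B A = {F. (\<forall>y\<in>Pow C. \<forall>c\<in>A. F y c \<ge> 0)
      \<and> (\<forall>y\<in>Pow C. \<forall>c\<in>A. c \<notin> y \<longrightarrow> F y c = 0)
      \<and> (\<forall>y\<in>Pow C. y \<inter> A \<noteq> {} \<longrightarrow> (\<Sum>c\<in>A \<inter> y. F y c) = real (B y))}"

definition Supp :: "'c set \<Rightarrow> ('c set \<Rightarrow> 'c \<Rightarrow> real) \<Rightarrow> 'c \<Rightarrow> real" where
  "Supp C F c = (\<Sum>y\<in>Pow C. F y c)"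

definition maxMin :: "'c set \<Rightarrow> ('c set \<Rightarrow> nat) \<Rightarrow> 'c set \<Rightarrow> real" where
  "maxMin C B A = (SUP F\<in>supp_family C B A. Min ((\<lambda>c. Supp C F c) ` A))"

definition opt_family :: "'c set \<Rightarrow> ('c set \<Rightarrow> nat) \<Rightarrow> 'c set \<Rightarrow> ('c set \<Rightarrow> 'c \<Rightarrow> real) set" where
  "opt_family C B A = {F \<in> supp_family C B A. \<forall>c\<in>A. Supp C F c \<ge> maxMin C B A}"

end

theory Submission
  imports Defs
begin

text \<open>Deleting \<open>c\<^sup>*\<close> never lowers the max-min value: its share of each ballot can
  be spread over the remaining approved candidates of that ballot. Conversely, if some
  distribution on \<open>\<A> - {c\<^sup>*}\<close> beat \<open>maxMin(\<sigma>, \<A>)\<close> on every candidate, extend it to \<open>\<A>\<close> and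
  mix a small amount of it into the optimal \<open>F\<close>: the other candidates strictly gain, while
  \<open>c\<^sup>*\<close>, which starts strictly above \<open>maxMin(\<sigma>, \<A>)\<close>, stays above it for a small enough
  weight. The resulting distribution would beat \<open>maxMin(\<sigma>, \<A>)\<close>, a contradiction.\<close>

lemma mem_supp_family_iff:
  "F \<in> supp_family C B A \<longleftrightarrow> (\<forall>y\<in>Pow C. \<forall>c\<in>A. F y c \<ge> 0)
      \<and> (\<forall>y\<in>Pow C. \<forall>c\<in>A. c \<notin> y \<longrightarrow> F y c = 0)
      \<and> (\<forall>y\<in>Pow C. y \<inter> A \<noteq> {} \<longrightarrow> (\<Sum>c\<in>A \<inter> y. F y c) = real (B y))"
  unfolding supp_family_def by simp

lemma supp_family_nonempty:
  assumes "finite A"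
  shows "supp_family C B A \<noteq> {}"
proof -
  define F where "F = (\<lambda>y c. if c \<in> y then real (B y) / real (card (A \<inter> y)) else 0)"
  have "F \<in> supp_family C B A"
    unfolding mem_supp_family_iff
  proof (intro conjI ballI impI)
    fix y assume "y \<inter> A \<noteq> {}"
    then have "card (A \<inter> y) \<noteq> 0" using assms by auto
    then show "(\<Sum>c\<in>A \<inter> y. F y c) = real (B y)" by (simp add: F_def)
  qed (auto simp: F_def)
  then show ?thesis by blast
qed

lemma Supp_le_sum_ballots:
  assumes "F \<in> supp_family C B A" "c \<in> A" "finite A"
  shows "Supp C F c \<le> (\<Sum>y\<in>Pow C. real (B y))"
  unfolding Supp_def
proof (rule sum_mono)
  fix y assume y: "y \<in> Pow C"
  show "F y c \<le> real (B y)"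
  proof (cases "c \<in> y")
    case True
    have "F y c \<le> (\<Sum>c\<in>A \<inter> y. F y c)"
      by (rule member_le_sum) (use assms y True in \<open>auto simp: mem_supp_family_iff\<close>)
    also have "\<dots> = real (B y)" using assms y True by (auto simp: mem_supp_family_iff)
    finally show ?thesis .
  qed (use assms y in \<open>auto simp: mem_supp_family_iff\<close>)
qed

lemma bdd_above_Min_Supp:
  assumes "finite A" "A \<noteq> {}"
  shows "bdd_above ((\<lambda>F. Min ((\<lambda>c. Supp C F c) ` A)) ` supp_family C B A)"
proof (rule bdd_aboveI2)
  fix F assume F: "F \<in> supp_family C B A"
  obtain c where c: "c \<in> A" using assms by blast
  have "Min ((\<lambda>c. Supp C F c) ` A) \<le> Supp C F c" using assms c by (intro Min_le) auto
  also have "\<dots> \<le> (\<Sum>y\<in>Pow C. real (B y))" by (rule Supp_le_sum_ballots[OF F c assms(1)])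
  finally show "Min ((\<lambda>c. Supp C F c) ` A) \<le> (\<Sum>y\<in>Pow C. real (B y))" .
qed

lemma Min_Supp_le_maxMin:
  assumes "F \<in> supp_family C B A" "finite A" "A \<noteq> {}"
  shows "Min ((\<lambda>c. Supp C F c) ` A) \<le> maxMin C B A"
  unfolding maxMin_def by (rule cSUP_upper[OF assms(1) bdd_above_Min_Supp[OF assms(2,3)]])

lemma maxMin_le:
  assumes "finite A" "\<And>F. F \<in> supp_family C B A \<Longrightarrow> Min ((\<lambda>c. Supp C F c) ` A) \<le> t"
  shows "maxMin C B A \<le> t"
  unfolding maxMin_def by (rule cSUP_least[OF supp_family_nonempty[OF assms(1)] assms(2)])

lemma sum_insert_inter_supp_family:
  assumes "G \<in> supp_family C B (insert a A)" "a \<notin> A" "finite A" "y \<in> Pow C"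
  shows "(\<Sum>c\<in>insert a A \<inter> y. G y c) = (\<Sum>c\<in>A \<inter> y. G y c) + G y a"
proof (cases "a \<in> y")
  case True
  then have "insert a A \<inter> y = insert a (A \<inter> y)" by blast
  then show ?thesis using assms by simp
next
  case False
  then have "G y a = 0" using assms by (auto simp: mem_supp_family_iff)
  moreover have "insert a A \<inter> y = A \<inter> y" using False by blast
  ultimately show ?thesis by simp
qed

lemma supp_family_redistribute:
  assumes G: "G \<in> supp_family C B (insert a A)" and "a \<notin> A" "finite A"
  shows "\<exists>G'\<in>supp_family C B A. \<forall>c\<in>A. Supp C G c \<le> Supp C G' c"
proof -
  define G' where
    "G' = (\<lambda>y c. G y c + (if c \<in> y then G y a / real (card (A \<inter> y)) else 0))"
  have share_nonneg: "G y a \<ge> 0" if "y \<in> Pow C" for y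
    using G that by (auto simp: mem_supp_family_iff)
  have "G' \<in> supp_family C B A"
    unfolding mem_supp_family_iff
  proof (intro conjI ballI impI)
    fix y c assume "y \<in> Pow C" "c \<in> A"
    then show "0 \<le> G' y c" using G share_nonneg by (auto simp: mem_supp_family_iff G'_def)
    show "c \<notin> y \<Longrightarrow> G' y c = 0"
      using G \<open>y \<in> Pow C\<close> \<open>c \<in> A\<close> by (auto simp: mem_supp_family_iff G'_def)
  next
    fix y assume y: "y \<in> Pow C" and ne: "y \<inter> A \<noteq> {}"
    have "card (A \<inter> y) \<noteq> 0" using assms ne by auto
    then have "(\<Sum>c\<in>A \<inter> y. G' y c) = (\<Sum>c\<in>A \<inter> y. G y c) + G y a"
      by (simp add: G'_def sum.distrib)
    also have "\<dots> = (\<Sum>c\<in>insert a A \<inter> y. G y c)"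
      using sum_insert_inter_supp_family[OF assms y] by simp
    also have "\<dots> = real (B y)" using G y ne by (auto simp: mem_supp_family_iff)
    finally show "(\<Sum>c\<in>A \<inter> y. G' y c) = real (B y)" .
  qed
  moreover have "Supp C G c \<le> Supp C G' c" for c
    unfolding Supp_def G'_def using share_nonneg by (intro sum_mono) auto
  ultimately show ?thesis by blast
qed

text \<open>A ballot approving \<open>a\<close> but nobody else in \<open>A\<close> is given entirely to \<open>a\<close>.\<close>

lemma supp_family_extend:
  assumes G: "G \<in> supp_family C B A" and "a \<notin> A" "finite A"
  shows "\<exists>G'\<in>supp_family C B (insert a A). \<forall>c\<in>A. Supp C G' c = Supp C G c"
proof -
  define G' where
    "G' = (\<lambda>y c. if c = a then (if a \<in> y \<and> y \<inter> A = {} then real (B y) else 0) else G y c)"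
  have G'_A: "G' y c = G y c" if "c \<in> A" for y c
    using \<open>a \<notin> A\<close> that by (auto simp: G'_def)
  have G'_a: "G' y a = (if a \<in> y \<and> y \<inter> A = {} then real (B y) else 0)" for y
    by (simp add: G'_def)
  have "G' \<in> supp_family C B (insert a A)"
    unfolding mem_supp_family_iff
  proof (intro conjI ballI impI)
    fix y c assume y: "y \<in> Pow C" and c: "c \<in> insert a A"
    then show "0 \<le> G' y c"
      using G by (cases "c = a") (auto simp: G'_a G'_A mem_supp_family_iff)
    show "c \<notin> y \<Longrightarrow> G' y c = 0"
      using G y c by (cases "c = a") (auto simp: G'_a G'_A mem_supp_family_iff)
  next
    fix y assume y: "y \<in> Pow C" and ne: "y \<inter> insert a A \<noteq> {}"
    show "(\<Sum>c\<in>insert a A \<inter> y. G' y c) = real (B y)"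
    proof (cases "y \<inter> A = {}")
      case True
      then have Ay: "insert a A \<inter> y = {a}" and "a \<in> y" using ne by blast+
      then show ?thesis unfolding Ay using True by (simp add: G'_a)
    next
      case False
      have "(\<Sum>c\<in>insert a A \<inter> y. G' y c) = (\<Sum>c\<in>A \<inter> y. G' y c)"
      proof (cases "a \<in> y")
        case True
        then have "insert a A \<inter> y = insert a (A \<inter> y)" by blast
        then show ?thesis using False \<open>a \<notin> A\<close> \<open>finite A\<close> by (simp add: G'_a)
      next
        case False
        then have "insert a A \<inter> y = A \<inter> y" by blast
        then show ?thesis by simp
      qed
      also have "\<dots> = (\<Sum>c\<in>A \<inter> y. G y c)" using G'_A by simp
      also have "\<dots> = real (B y)" using G y False by (auto simp: mem_supp_family_iff)
      finally show ?thesis .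
    qed
  qed
  moreover have "Supp C G' c = Supp C G c" if "c \<in> A" for c
    unfolding Supp_def using G'_A[OF that] by simp
  ultimately show ?thesis by blast
qed

lemma supp_family_convex:
  assumes "F \<in> supp_family C B A" "G \<in> supp_family C B A" "0 \<le> e" "e \<le> 1"
  shows "(\<lambda>y c. (1 - e) * F y c + e * G y c) \<in> supp_family C B A"
  unfolding mem_supp_family_iff
proof (intro conjI ballI impI)
  fix y assume "y \<in> Pow C" "y \<inter> A \<noteq> {}"
  then have "(\<Sum>c\<in>A \<inter> y. F y c) = real (B y)" "(\<Sum>c\<in>A \<inter> y. G y c) = real (B y)"
    using assms by (auto simp: mem_supp_family_iff)
  then have "(\<Sum>c\<in>A \<inter> y. (1 - e) * F y c + e * G y c) = (1 - e) * real (B y) + e * real (B y)"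
    by (simp add: sum.distrib flip: sum_distrib_left)
  then show "(\<Sum>c\<in>A \<inter> y. (1 - e) * F y c + e * G y c) = real (B y)"
    by (simp add: algebra_simps)
qed (use assms in \<open>auto simp: mem_supp_family_iff\<close>)

lemma Supp_convex_comb:
  "Supp C (\<lambda>y c. (1 - e) * F y c + e * G y c) c = (1 - e) * Supp C F c + e * Supp C G c"
  by (simp add: Supp_def sum.distrib sum_distrib_left)

lemma convex_comb_gt_left:
  fixes m s g :: real
  assumes "m < s"
  shows "\<exists>e. 0 < e \<and> e < 1 \<and> m < (1 - e) * s + e * g"
proof -
  define d where "d = (s - m) + \<bar>s - g\<bar> + 1"
  define e where "e = (s - m) / d"
  have d: "d > 0" "s - m < d" "\<bar>s - g\<bar> < d" using assms by (auto simp: d_def)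
  have e: "0 < e" "e < 1" using assms d by (auto simp: e_def)
  have "e * (s - g) \<le> e * \<bar>s - g\<bar>" using e by (intro mult_left_mono) auto
  also have "\<dots> = (s - m) * (\<bar>s - g\<bar> / d)" by (simp add: e_def)
  also have "\<dots> < (s - m) * 1" using assms d by (intro mult_strict_left_mono) auto
  finally show ?thesis using e by (intro exI[of _ e]) (simp add: algebra_simps)
qed

lemma convex_comb_gt:
  fixes m x y e :: real
  assumes "m \<le> x" "m < y" "0 < e" "e < 1"
  shows "m < (1 - e) * x + e * y"
proof -
  have "(1 - e) * m \<le> (1 - e) * x" using assms by (intro mult_left_mono) auto
  moreover have "e * m < e * y" using assms by simp
  ultimately show ?thesis by (simp add: algebra_simps)
qed

lemma maxMin_insert_le:
  assumes "finite A" "a \<notin> A" "A \<noteq> {}"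
  shows "maxMin C B (insert a A) \<le> maxMin C B A"
proof (rule maxMin_le)
  fix G assume "G \<in> supp_family C B (insert a A)"
  then obtain G' where G': "G' \<in> supp_family C B A" and le: "\<forall>c\<in>A. Supp C G c \<le> Supp C G' c"
    using supp_family_redistribute[OF _ assms(2,1)] by blast
  have "Min ((\<lambda>c. Supp C G c) ` insert a A) \<le> Supp C G' c" if "c \<in> A" for c
  proof -
    have "Min ((\<lambda>c. Supp C G c) ` insert a A) \<le> Supp C G c" using assms(1) that by (intro Min_le) auto
    also have "\<dots> \<le> Supp C G' c" using le that by blast
    finally show ?thesis .
  qed
  then have "Min ((\<lambda>c. Supp C G c) ` insert a A) \<le> Min ((\<lambda>c. Supp C G' c) ` A)"
    using assms by (simp add: Min_ge_iff)
  also have "\<dots> \<le> maxMin C B A" by (rule Min_Supp_le_maxMin[OF G' assms(1,3)])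
  finally show "Min ((\<lambda>c. Supp C G c) ` insert a A) \<le> maxMin C B A" .
qed (use assms in simp)

lemma maxMin_le_insert:
  assumes "finite A" "a \<notin> A" "A \<noteq> {}"
    and F: "F \<in> opt_family C B (insert a A)"
    and above: "maxMin C B (insert a A) < Supp C F a"
  shows "maxMin C B A \<le> maxMin C B (insert a A)"
proof (rule maxMin_le[OF \<open>finite A\<close>], rule ccontr)
  let ?m = "maxMin C B (insert a A)"
  fix G assume "G \<in> supp_family C B A" "\<not> Min ((\<lambda>c. Supp C G c) ` A) \<le> ?m"
  then have G_above: "\<forall>c\<in>A. ?m < Supp C G c" using assms by (auto simp: not_le Min_gr_iff)
  obtain G' where G': "G' \<in> supp_family C B (insert a A)" and "\<forall>c\<in>A. Supp C G' c = Supp C G c"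
    using supp_family_extend[OF \<open>G \<in> supp_family C B A\<close> assms(2,1)] by blast
  with G_above have G'_above: "\<forall>c\<in>A. ?m < Supp C G' c" by simp
  obtain e where e: "0 < e" "e < 1" "?m < (1 - e) * Supp C F a + e * Supp C G' a"
    using convex_comb_gt_left[OF above] by blast
  define H where "H = (\<lambda>y c. (1 - e) * F y c + e * G' y c)"
  have F_fam: "F \<in> supp_family C B (insert a A)" and F_opt: "\<forall>c\<in>A. ?m \<le> Supp C F c"
    using F by (auto simp: opt_family_def)
  have H: "H \<in> supp_family C B (insert a A)"
    unfolding H_def using F_fam G' e by (intro supp_family_convex) auto
  have "\<forall>c\<in>insert a A. ?m < Supp C H c"
    using e F_opt G'_above by (auto simp: H_def Supp_convex_comb intro: convex_comb_gt)
  then have "?m < Min ((\<lambda>c. Supp C H c) ` insert a A)" using assms by (simp add: Min_gr_iff)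
  moreover have "Min ((\<lambda>c. Supp C H c) ` insert a A) \<le> ?m"
    by (rule Min_Supp_le_maxMin[OF H]) (use assms in auto)
  ultimately show False by simp
qed

theorem lemma4:
  fixes V :: "'v set" and C :: "'c set" and S :: nat and B :: "'c set \<Rightarrow> nat"
    and A :: "'c set" and F :: "'c set \<Rightarrow> 'c \<Rightarrow> real" and cstar :: 'c
  assumes "election V C S B"
    and "A \<subseteq> C" and "A \<noteq> {}"
    and "F \<in> opt_family C B A"
    and "cstar \<in> A"
    and "Supp C F cstar > maxMin C B A"
  shows "maxMin C B A = maxMin C B (A - {cstar})"
proof -
  have "finite A" using assms(1,2) by (auto simp: election_def intro: finite_subset)
  have A: "A = insert cstar (A - {cstar})" using \<open>cstar \<in> A\<close> by blast
  have ne: "A - {cstar} \<noteq> {}"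
  proof
    assume "A - {cstar} = {}"
    then have "A = {cstar}" using A by blast
    then have "Min ((\<lambda>c. Supp C F c) ` A) = Supp C F cstar" by simp
    moreover have "F \<in> supp_family C B A" using assms(4) by (simp add: opt_family_def)
    ultimately show False
      using Min_Supp_le_maxMin \<open>finite A\<close> assms(3,6) by fastforce
  qed
  have fin: "finite (A - {cstar})" and notin: "cstar \<notin> A - {cstar}" using \<open>finite A\<close> by auto
  show ?thesis
  proof (rule order_antisym)
    show "maxMin C B A \<le> maxMin C B (A - {cstar})"
      by (rule maxMin_insert_le[OF fin notin ne, folded A])
    show "maxMin C B (A - {cstar}) \<le> maxMin C B A"
      by (rule maxMin_le_insert[OF fin notin ne, folded A, OF assms(4,6)])
  qed
qed

end
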